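(* Let $1<\alpha<2$ and let $Z=(Z_t)_{t\ge0}$ be an $\alpha$-stable Lévy process started at $0$ with Lévy triplet $(0,\nu_Z,\gamma)$, $\nu_Z(\mathrm{d}z)=(A\mathbf{1}_{z>0}+B\mathbf{1}_{z<0})|z|^{-(\alpha+1)}\mathrm{d}z$ for constants $A,B>0$, which is a martingale, i.e. $\gamma+\int_{|z|\ge1}z\,\nu_Z(\mathrm{d}z)=0$. Let $\kappa=1/\alpha$, let $\zeta$ be a subordinator independent of $Z$ with Laplace exponent $\psi$ satisfying $\psi(\kappa)=\kappa$, and let $X$ be the process associated with $Z$ and $\zeta$ (defined in the context). Then for all $t\ge s>0$, \[ X_t=(t/s)^{\kappa}\bigl(R_{s,t}^{\kappa}X_s+s^{\kappa}(1-R_{s,t})^{\kappa}\xi_{s,t}\bigr), \] where $R_{s,t}\stackrel{d}{=}e^{-\zeta_{\ln(t/s)}}$, $\xi_{s,t}\stackrel{d}{=}Z_1$, and $R_{s,t}$, $\xi_{s,t}$, $X_s$ are independent (that is, $(X_s,X_t)$ has the same joint law as the pair with $X_t$ replaced by this expression).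
   Context: $Z$ is a Markov process which is $\kappa$-self-similar with $\kappa=1/\alpha$: $(Z_{ct})_{t\ge0}\stackrel{d}{=}(c^\kappa Z_t)_{t\ge0}$. A subordinator $\zeta$ (nonnegative independent stationary increments, $\zeta_0=0$) has Laplace exponent $\psi$ defined by $\mathbb{E}[e^{-\lambda\zeta_a}]=e^{-a\psi(\lambda)}$. The process $X$ associated with $Z$ and $\zeta$ is the process $(X_t)_{t\ge0}$, $X_0=0$, such that for every $a\in\mathbb{R}$, $(X_t)_{t\ge e^{-a}}$ has the same finite-dimensional distributions as $(t^{\kappa}e^{-\kappa\zeta_{a+\ln t}}Z_{e^{\zeta_{a+\ln t}}})_{t\ge e^{-a}}$. *)

theory Defs
  imports "HOL-Probability.Probability"
begin

text \<open>Processes are indexed by real times; only times t \<ge> 0 are meaningful.\<close>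

definition indep_increments :: "'a measure \<Rightarrow> (real \<Rightarrow> 'a \<Rightarrow> real) \<Rightarrow> bool" where
  "indep_increments M P \<longleftrightarrow>
     (\<forall>(n::nat) (ts::nat \<Rightarrow> real). 0 \<le> ts 0 \<longrightarrow> (\<forall>i<n. ts i < ts (Suc i)) \<longrightarrow>
        prob_space.indep_vars M (\<lambda>_. borel) (\<lambda>i \<omega>. P (ts (Suc i)) \<omega> - P (ts i) \<omega>) {..<n})"

definition stationary_increments :: "'a measure \<Rightarrow> (real \<Rightarrow> 'a \<Rightarrow> real) \<Rightarrow> bool" where
  "stationary_increments M P \<longleftrightarrow>
     (\<forall>s t. 0 \<le> s \<longrightarrow> 0 \<le> t \<longrightarrow>
        distr M borel (\<lambda>\<omega>. P (s + t) \<omega> - P s \<omega>) = distr M borel (\<lambda>\<omega>. P t \<omega> - P 0 \<omega>))"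

definition cadlag_paths :: "(real \<Rightarrow> 'a \<Rightarrow> real) \<Rightarrow> bool" where
  "cadlag_paths P \<longleftrightarrow>
     (\<forall>\<omega>. (\<forall>t\<ge>0. ((\<lambda>r. P r \<omega>) \<longlongrightarrow> P t \<omega>) (at_right t)) \<and>
          (\<forall>t>0. \<exists>l. ((\<lambda>r. P r \<omega>) \<longlongrightarrow> l) (at_left t)))"

definition path :: "(real \<Rightarrow> 'a \<Rightarrow> real) \<Rightarrow> 'a \<Rightarrow> real \<Rightarrow> real" where
  "path P \<omega> = (\<lambda>t\<in>{0..}. P t \<omega>)"

definition stable_density :: "real \<Rightarrow> real \<Rightarrow> real \<Rightarrow> real \<Rightarrow> real" where
  "stable_density \<alpha> A B z =
     (A * indicator {0<..} z + B * indicator {..<0} z) * \<bar>z\<bar> powr (-(\<alpha> + 1))"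

text \<open>Characteristic exponent of a Levy triplet (0, nu, gamma), truncation 1_{|z|<1}:
  E[exp(i u Z_t)] = exp(t * levy_exponent gamma nu u).\<close>
definition levy_exponent :: "real \<Rightarrow> (real \<Rightarrow> real) \<Rightarrow> real \<Rightarrow> complex" where
  "levy_exponent \<gamma> f u =
     \<i> * complex_of_real (\<gamma> * u) +
     (CLINT z|lborel. (iexp (u * z) - 1 - \<i> * complex_of_real (u * z * indicator {z. \<bar>z\<bar> < 1} z))
                        * complex_of_real (f z))"

text \<open>A Levy process started at 0 with triplet (0, nu, gamma), nu having density f.\<close>
definition levy_process :: "'a measure \<Rightarrow> (real \<Rightarrow> 'a \<Rightarrow> real) \<Rightarrow> real \<Rightarrow> (real \<Rightarrow> real) \<Rightarrow> bool" where
  "levy_process M Z \<gamma> f \<longleftrightarrow>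
     (\<forall>t\<ge>0. Z t \<in> borel_measurable M) \<and>
     (\<forall>\<omega>. Z 0 \<omega> = 0) \<and>
     cadlag_paths Z \<and>
     indep_increments M Z \<and> stationary_increments M Z \<and>
     (\<forall>t\<ge>0. \<forall>u. char (distr M borel (Z t)) u = exp (complex_of_real t * levy_exponent \<gamma> f u))"

definition subordinator :: "'a measure \<Rightarrow> (real \<Rightarrow> 'a \<Rightarrow> real) \<Rightarrow> (real \<Rightarrow> real) \<Rightarrow> bool" where
  "subordinator M \<zeta> \<psi> \<longleftrightarrow>
     (\<forall>a\<ge>0. \<zeta> a \<in> borel_measurable M) \<and>
     (\<forall>\<omega>. \<zeta> 0 \<omega> = 0) \<and>
     (\<forall>a\<ge>0. \<forall>\<omega>. 0 \<le> \<zeta> a \<omega>) \<and>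
     indep_increments M \<zeta> \<and> stationary_increments M \<zeta> \<and>
     (\<forall>l\<ge>0. \<forall>a\<ge>0. (LINT \<omega>|M. exp (- l * \<zeta> a \<omega>)) = exp (- a * \<psi> l))"

definition associated_process ::
  "real \<Rightarrow> 'a measure \<Rightarrow> (real \<Rightarrow> 'a \<Rightarrow> real) \<Rightarrow> (real \<Rightarrow> 'a \<Rightarrow> real) \<Rightarrow>
   'b measure \<Rightarrow> (real \<Rightarrow> 'b \<Rightarrow> real) \<Rightarrow> bool" where
  "associated_process \<kappa> M Z \<zeta> N X \<longleftrightarrow>
     (\<forall>t\<ge>0. X t \<in> borel_measurable N) \<and>
     (\<forall>\<omega>. X 0 \<omega> = 0) \<and>
     (\<forall>a J. finite J \<longrightarrow> J \<subseteq> {exp (- a)..} \<longrightarrow>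
        distr N (Pi\<^sub>M J (\<lambda>_. borel)) (\<lambda>\<omega>. \<lambda>t\<in>J. X t \<omega>) =
        distr M (Pi\<^sub>M J (\<lambda>_. borel))
          (\<lambda>\<omega>. \<lambda>t\<in>J. t powr \<kappa> * exp (- \<kappa> * \<zeta> (a + ln t) \<omega>) * Z (exp (\<zeta> (a + ln t) \<omega>)) \<omega>))"

end

theory Submission
  imports Defs
begin

text \<open>Compensating every jump, which is possible since \<open>\<alpha> > 1\<close> and \<open>Z\<close> is a martingale, makes the
  Levy exponent of \<open>Z\<close> exactly \<open>\<alpha>\<close>-homogeneous, so \<open>Z\<^sub>c\<close> has the law of \<open>c\<^sup>\<kappa> Z\<^sub>1\<close>. With
  independent stationary increments this gives, for \<open>0 < r \<le> 1\<close>, the joint law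
  \<open>(Z\<^sub>1, r\<^sup>\<kappa> Z\<^sub>1\<^sub>/\<^sub>r) = (x, r\<^sup>\<kappa> x + (1 - r)\<^sup>\<kappa> y)\<close> with \<open>x, y\<close> independent copies of \<open>Z\<^sub>1\<close>.
  The definition of \<open>X\<close> with \<open>a = - ln s\<close> turns \<open>(X\<^sub>s, X\<^sub>t)\<close> into
  \<open>(s\<^sup>\<kappa> Z\<^sub>1, t\<^sup>\<kappa> R\<^sup>\<kappa> Z\<^sub>1\<^sub>/\<^sub>R)\<close> with \<open>R = e\<^sup>-\<^sup>\<zeta>\<^sup>L\<close>, \<open>L = ln (t/s)\<close>, independent of \<open>Z\<close>;
  conditioning on \<open>R\<close> and using the pair law finishes the proof.\<close>

section \<open>The compensated Levy exponent of the stable law\<close>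

lemma integrable_add_reflection:
  fixes g :: "real \<Rightarrow> real"
  assumes "integrable lborel g"
  shows "integrable lborel (\<lambda>z. g z + g (- z))"
proof -
  have "integrable lborel (\<lambda>z. g (0 + (-1) * z))"
    by (rule lborel_integrable_real_affine[OF assms]) simp
  from Bochner_Integration.integrable_add[OF assms this] show ?thesis by simp
qed

lemma integrable_abs_powr_near_0:
  fixes p :: real
  assumes "p > -1"
  shows "integrable lborel (\<lambda>z. indicator {z. \<bar>z\<bar> \<le> 1} z * \<bar>z\<bar> powr p)"
proof -
  have "(\<lambda>x. x powr p) absolutely_integrable_on {0<..1}"
    by (intro nonnegative_absolutely_integrable_1 integrable_on_powr_from_0') (use assms in auto)
  then have "integrable lborel (\<lambda>z. indicator {0<..1} z * z powr p)"
    unfolding set_integrable_def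
    by (subst (asm) integrable_completion) (auto intro!: borel_measurable_continuous_on_indicator continuous_intros)
  then have "integrable lborel (\<lambda>z. indicator {0<..1} z * z powr p + indicator {0<..1} (-z) * (-z) powr p)"
    by (rule integrable_add_reflection)
  moreover have "(\<lambda>z. indicator {0<..1} z * z powr p + indicator {0<..1} (-z) * (-z) powr p)
      = (\<lambda>z. indicator {z. \<bar>z\<bar> \<le> 1} z * \<bar>z\<bar> powr p)"
    by (auto simp: fun_eq_iff indicator_def)
  ultimately show ?thesis by simp
qed

lemma integrable_abs_powr_near_infinity:
  fixes p :: real
  assumes "p < -1"
  shows "integrable lborel (\<lambda>z. indicator {z. 1 \<le> \<bar>z\<bar>} z * \<bar>z\<bar> powr p)"
proof -
  have "(\<lambda>x. x powr p) integrable_on {1..}"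
    using has_integral_powr_to_inf[OF assms, of 1] unfolding integrable_on_def by auto
  then have "(\<lambda>x. x powr p) absolutely_integrable_on {1..}"
    by (intro nonnegative_absolutely_integrable_1) auto
  then have "integrable lborel (\<lambda>z. indicator {1..} z * z powr p)"
    unfolding set_integrable_def
    by (subst (asm) integrable_completion) (auto intro!: borel_measurable_continuous_on_indicator continuous_intros)
  then have "integrable lborel (\<lambda>z. indicator {1..} z * z powr p + indicator {1..} (-z) * (-z) powr p)"
    by (rule integrable_add_reflection)
  moreover have "(\<lambda>z. indicator {1..} z * z powr p + indicator {1..} (-z) * (-z) powr p)
      = (\<lambda>z. indicator {z. 1 \<le> \<bar>z\<bar>} z * \<bar>z\<bar> powr p)"
    by (auto simp: fun_eq_iff indicator_def)
  ultimately show ?thesis by simp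
qed

lemma stable_density_nonneg: "A \<ge> 0 \<Longrightarrow> B \<ge> 0 \<Longrightarrow> stable_density \<alpha> A B z \<ge> 0"
  unfolding stable_density_def by (auto simp: indicator_def)

lemma stable_density_le: "A \<ge> 0 \<Longrightarrow> B \<ge> 0 \<Longrightarrow> stable_density \<alpha> A B z \<le> (A + B) * \<bar>z\<bar> powr (-(\<alpha> + 1))"
  unfolding stable_density_def by (auto simp: indicator_def intro!: mult_right_mono)

lemma borel_measurable_stable_density[measurable]: "stable_density \<alpha> A B \<in> borel_measurable borel"
  unfolding stable_density_def by measurable

lemma stable_density_divide:
  assumes "l > 0"
  shows "stable_density \<alpha> A B (x / l) = l powr (\<alpha> + 1) * stable_density \<alpha> A B x"
proof -
  have "indicator {0<..} (x / l) = (indicator {0<..} x :: real)"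
    "indicator {..<0} (x / l) = (indicator {..<0} x :: real)"
    using assms by (auto simp: indicator_def zero_less_divide_iff divide_less_0_iff)
  moreover have "\<bar>x / l\<bar> powr (-(\<alpha> + 1)) = l powr (\<alpha> + 1) * \<bar>x\<bar> powr (-(\<alpha> + 1))"
  proof -
    have "l powr (\<alpha> + 1) * l powr (-(\<alpha> + 1)) = 1"
      using assms by (simp add: powr_add[symmetric])
    then show ?thesis
      using assms by (simp add: abs_divide powr_divide divide_simps)
  qed
  ultimately show ?thesis unfolding stable_density_def by simp
qed

lemma norm_iexp_sub_linear_le_square: "cmod (iexp x - 1 - \<i> * complex_of_real x) \<le> x\<^sup>2 / 2"
  using iexp_approx1[of x 1] by (simp add: diff_diff_eq power2_eq_square)

lemma norm_iexp_sub_linear_le: "cmod (iexp x - 1 - \<i> * complex_of_real x) \<le> 2 + \<bar>x\<bar>"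
proof -
  have "cmod (iexp x - 1 - \<i> * complex_of_real x) \<le> cmod (iexp x) + cmod 1 + cmod (\<i> * complex_of_real x)"
    using norm_triangle_ineq4[of "iexp x - 1" "\<i> * complex_of_real x"] norm_triangle_ineq4[of "iexp x" 1]
    by linarith
  also have "\<dots> = 2 + \<bar>x\<bar>" by (simp add: norm_mult)
  finally show ?thesis .
qed

text \<open>Unlike the truncated integrand of \<open>levy_exponent\<close>, this one is mapped to a multiple of itself
  by the substitution \<open>z \<mapsto> z / l\<close> when \<open>f\<close> is the stable density.\<close>
definition compensated_integrand :: "(real \<Rightarrow> real) \<Rightarrow> real \<Rightarrow> real \<Rightarrow> complex" where
  "compensated_integrand f u z = (iexp (u * z) - 1 - \<i> * complex_of_real (u * z)) * complex_of_real (f z)"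

lemma borel_measurable_compensated_integrand[measurable]:
  assumes [measurable]: "f \<in> borel_measurable borel"
  shows "compensated_integrand f u \<in> borel_measurable borel"
proof -
  have [measurable]: "(\<lambda>z. iexp (u * z) - 1 - \<i> * complex_of_real (u * z)) \<in> borel_measurable borel"
    by (intro borel_measurable_continuous_onI continuous_intros)
  show ?thesis unfolding compensated_integrand_def by measurable
qed

lemma levy_exponent_eq_compensated:
  assumes "integrable lborel (compensated_integrand f u)"
    and "integrable lborel (\<lambda>z. indicator {z. 1 \<le> \<bar>z\<bar>} z * z * f z)"
    and "\<gamma> + (LINT z|lborel. indicator {z. 1 \<le> \<bar>z\<bar>} z * z * f z) = 0"
  shows "levy_exponent \<gamma> f u = (CLINT z|lborel. compensated_integrand f u z)"
proof -
  let ?h = "\<lambda>z. indicator {z. 1 \<le> \<bar>z\<bar>} z * z * f z"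
  have integrand_eq: "(iexp (u * z) - 1 - \<i> * complex_of_real (u * z * indicator {z. \<bar>z\<bar> < 1} z)) * complex_of_real (f z)
     = compensated_integrand f u z + \<i> * complex_of_real u * complex_of_real (?h z)" for z
    unfolding compensated_integrand_def by (simp add: indicator_def algebra_simps)
  have "integrable lborel (\<lambda>z. \<i> * complex_of_real u * complex_of_real (?h z))"
    by (intro Bochner_Integration.integrable_mult_right integrable_of_real assms(2))
  then have "levy_exponent \<gamma> f u
     = \<i> * complex_of_real (\<gamma> * u) + ((CLINT z|lborel. compensated_integrand f u z)
         + \<i> * complex_of_real u * complex_of_real (LINT z|lborel. ?h z))"
    unfolding levy_exponent_def integrand_eq
    by (subst Bochner_Integration.integral_add[OF assms(1)])
       (simp_all only: integral_mult_right_zero integral_complex_of_real)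
  also have "\<dots> = (CLINT z|lborel. compensated_integrand f u z) + \<i> * complex_of_real (u * (\<gamma> + (LINT z|lborel. ?h z)))"
    by (simp add: algebra_simps)
  finally show ?thesis using assms(3) by simp
qed

lemma norm_compensated_integrand_stable_le:
  assumes "A \<ge> 0" "B \<ge> 0"
  shows "cmod (compensated_integrand (stable_density \<alpha> A B) u z)
    \<le> (A + B) * (u\<^sup>2 / 2 * (indicator {z. \<bar>z\<bar> \<le> 1} z * \<bar>z\<bar> powr (1 - \<alpha>))
         + 2 * (indicator {z. 1 \<le> \<bar>z\<bar>} z * \<bar>z\<bar> powr (-(\<alpha> + 1)))
         + \<bar>u\<bar> * (indicator {z. 1 \<le> \<bar>z\<bar>} z * \<bar>z\<bar> powr (-\<alpha>)))"
    (is "_ \<le> (A + B) * ?D")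
proof -
  let ?f = "stable_density \<alpha> A B z"
  have f: "0 \<le> ?f" "?f \<le> (A + B) * \<bar>z\<bar> powr (-(\<alpha> + 1))"
    using stable_density_nonneg stable_density_le assms by auto
  have norm_eq: "cmod (compensated_integrand (stable_density \<alpha> A B) u z)
      = cmod (iexp (u * z) - 1 - \<i> * complex_of_real (u * z)) * ?f"
    unfolding compensated_integrand_def norm_mult using f by simp
  show ?thesis
  proof (cases "\<bar>z\<bar> \<le> 1")
    case True
    have "cmod (compensated_integrand (stable_density \<alpha> A B) u z)
        \<le> (u * z)\<^sup>2 / 2 * ((A + B) * \<bar>z\<bar> powr (-(\<alpha> + 1)))"
      unfolding norm_eq by (intro mult_mono norm_iexp_sub_linear_le_square f) auto
    also have "\<dots> = (A + B) * (u\<^sup>2 / 2 * (\<bar>z\<bar> * (\<bar>z\<bar> * \<bar>z\<bar> powr (-(\<alpha> + 1)))))"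
      by (simp add: power2_eq_square abs_mult_self_eq)
    also have "\<bar>z\<bar> * (\<bar>z\<bar> * \<bar>z\<bar> powr (-(\<alpha> + 1))) = \<bar>z\<bar> powr (1 - \<alpha>)"
      by (simp add: powr_mult_base)
    also have "(A + B) * (u\<^sup>2 / 2 * \<bar>z\<bar> powr (1 - \<alpha>)) \<le> (A + B) * ?D"
      using True assms by (intro mult_left_mono) (auto simp: indicator_def)
    finally show ?thesis .
  next
    case False
    have "cmod (compensated_integrand (stable_density \<alpha> A B) u z)
        \<le> (2 + \<bar>u * z\<bar>) * ((A + B) * \<bar>z\<bar> powr (-(\<alpha> + 1)))"
      unfolding norm_eq by (intro mult_mono norm_iexp_sub_linear_le f) auto
    also have "\<dots> = (A + B) * (2 * \<bar>z\<bar> powr (-(\<alpha> + 1)) + \<bar>u\<bar> * (\<bar>z\<bar> * \<bar>z\<bar> powr (-(\<alpha> + 1))))"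
      by (simp add: abs_mult algebra_simps)
    also have "\<bar>z\<bar> * \<bar>z\<bar> powr (-(\<alpha> + 1)) = \<bar>z\<bar> powr (-\<alpha>)"
      by (simp add: powr_mult_base)
    also have "(A + B) * (2 * \<bar>z\<bar> powr (-(\<alpha> + 1)) + \<bar>u\<bar> * \<bar>z\<bar> powr (-\<alpha>)) \<le> (A + B) * ?D"
      using False assms by (intro mult_left_mono) (auto simp: indicator_def)
    finally show ?thesis .
  qed
qed

lemma integrable_compensated_integrand_stable:
  assumes "1 < \<alpha>" "\<alpha> < 2" "A \<ge> 0" "B \<ge> 0"
  shows "integrable lborel (compensated_integrand (stable_density \<alpha> A B) u)"
proof -
  have "integrable lborel (\<lambda>z. indicator {z. \<bar>z\<bar> \<le> 1} z * \<bar>z\<bar> powr (1 - \<alpha>))"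
    "integrable lborel (\<lambda>z. indicator {z. 1 \<le> \<bar>z\<bar>} z * \<bar>z\<bar> powr (-(\<alpha> + 1)))"
    "integrable lborel (\<lambda>z. indicator {z. 1 \<le> \<bar>z\<bar>} z * \<bar>z\<bar> powr (-\<alpha>))"
    using assms by (auto intro!: integrable_abs_powr_near_0 integrable_abs_powr_near_infinity)
  then have "integrable lborel (\<lambda>z. (A + B) * (u\<^sup>2 / 2 * (indicator {z. \<bar>z\<bar> \<le> 1} z * \<bar>z\<bar> powr (1 - \<alpha>))
         + 2 * (indicator {z. 1 \<le> \<bar>z\<bar>} z * \<bar>z\<bar> powr (-(\<alpha> + 1)))
         + \<bar>u\<bar> * (indicator {z. 1 \<le> \<bar>z\<bar>} z * \<bar>z\<bar> powr (-\<alpha>))))"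
    by (intro Bochner_Integration.integrable_mult_right Bochner_Integration.integrable_add)
  then show ?thesis
    by (rule Bochner_Integration.integrable_bound, measurable)
       (intro AE_I2 order_trans[OF norm_compensated_integrand_stable_le[OF assms(3,4)]],
        simp only: real_norm_def abs_ge_self)
qed

lemma integrable_large_jumps_stable:
  assumes "1 < \<alpha>" "A \<ge> 0" "B \<ge> 0"
  shows "integrable lborel (\<lambda>z. indicator {z. 1 \<le> \<bar>z\<bar>} z * z * stable_density \<alpha> A B z)"
proof (rule Bochner_Integration.integrable_bound)
  show "integrable lborel (\<lambda>z. (A + B) * (indicator {z. 1 \<le> \<bar>z\<bar>} z * \<bar>z\<bar> powr (-\<alpha>)))"
    using assms by (intro Bochner_Integration.integrable_mult_right integrable_abs_powr_near_infinity) auto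
  have "\<bar>z\<bar> * stable_density \<alpha> A B z \<le> (A + B) * \<bar>z\<bar> powr (-\<alpha>)" for z
    using mult_left_mono[OF stable_density_le[OF assms(2,3), of \<alpha> z], of "\<bar>z\<bar>"]
    by (simp add: powr_mult_base algebra_simps)
  then show "AE z in lborel. norm (indicator {z. 1 \<le> \<bar>z\<bar>} z * z * stable_density \<alpha> A B z)
      \<le> norm ((A + B) * (indicator {z. 1 \<le> \<bar>z\<bar>} z * \<bar>z\<bar> powr (-\<alpha>)))"
    using stable_density_nonneg[OF assms(2,3)] assms
    by (intro AE_I2) (simp add: indicator_def abs_mult)
qed simp

lemma integral_compensated_stable_scale:
  assumes "l > 0"
  shows "(CLINT z|lborel. compensated_integrand (stable_density \<alpha> A B) (l * u) z)
    = complex_of_real (l powr \<alpha>) * (CLINT z|lborel. compensated_integrand (stable_density \<alpha> A B) u z)"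
proof -
  have "(CLINT z|lborel. compensated_integrand (stable_density \<alpha> A B) (l * u) z)
      = \<bar>1 / l\<bar> *\<^sub>R (CLINT x|lborel. compensated_integrand (stable_density \<alpha> A B) (l * u) (0 + 1 / l * x))"
    by (rule lborel_integral_real_affine) (use assms in auto)
  also have "(\<lambda>x. compensated_integrand (stable_density \<alpha> A B) (l * u) (0 + 1 / l * x))
      = (\<lambda>x. complex_of_real (l powr (\<alpha> + 1)) * compensated_integrand (stable_density \<alpha> A B) u x)"
    using stable_density_divide[OF assms] assms by (simp add: compensated_integrand_def fun_eq_iff)
  also have "\<bar>1 / l\<bar> *\<^sub>R (CLINT x|lborel. complex_of_real (l powr (\<alpha> + 1)) * compensated_integrand (stable_density \<alpha> A B) u x)
      = complex_of_real (l powr (\<alpha> + 1) / l) * (CLINT z|lborel. compensated_integrand (stable_density \<alpha> A B) u z)"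
    using assms by (simp add: scaleR_conv_of_real)
  also have "l powr (\<alpha> + 1) / l = l powr \<alpha>"
    using assms by (simp add: powr_add)
  finally show ?thesis .
qed

lemma levy_exponent_stable_homogeneous:
  assumes "1 < \<alpha>" "\<alpha> < 2" "A \<ge> 0" "B \<ge> 0"
    and "\<gamma> + (LINT z|lborel. indicator {z. 1 \<le> \<bar>z\<bar>} z * z * stable_density \<alpha> A B z) = 0"
    and "c > 0"
  shows "levy_exponent \<gamma> (stable_density \<alpha> A B) (c powr (1 / \<alpha>) * u)
    = complex_of_real c * levy_exponent \<gamma> (stable_density \<alpha> A B) u"
proof -
  have "levy_exponent \<gamma> (stable_density \<alpha> A B) v = (CLINT z|lborel. compensated_integrand (stable_density \<alpha> A B) v z)" for v
    using assms
    by (intro levy_exponent_eq_compensated integrable_compensated_integrand_stable integrable_large_jumps_stable) auto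
  moreover have "(c powr (1 / \<alpha>)) powr \<alpha> = c"
    using assms by (simp add: powr_powr)
  ultimately show ?thesis
    using integral_compensated_stable_scale[of "c powr (1 / \<alpha>)" \<alpha> A B u] assms(6) by simp
qed

section \<open>Product measures and independence\<close>

lemma pair_measure_distr_right:
  assumes "prob_space M1" "prob_space M2" "g \<in> measurable M2 N"
  shows "M1 \<Otimes>\<^sub>M distr M2 N g = distr (M1 \<Otimes>\<^sub>M M2) (M1 \<Otimes>\<^sub>M N) (\<lambda>(x, y). (x, g y))"
proof -
  interpret M1: prob_space M1 by fact
  interpret Dg: prob_space "distr M2 N g"
    using assms(2,3) by (rule prob_space.prob_space_distr)
  have "M1 \<Otimes>\<^sub>M distr M2 N g = distr M1 M1 (\<lambda>x. x) \<Otimes>\<^sub>M distr M2 N g"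
    by (simp add: distr_id)
  also have "\<dots> = distr (M1 \<Otimes>\<^sub>M M2) (M1 \<Otimes>\<^sub>M N) (\<lambda>(x, y). (x, g y))"
    using assms(3) by (intro pair_measure_distr) (simp_all add: distr_id M1.sigma_finite_measure_axioms
        Dg.sigma_finite_measure_axioms)
  finally show ?thesis .
qed

lemma pair_measure_left_commute:
  assumes "sigma_finite_measure A" "sigma_finite_measure B" "sigma_finite_measure C"
  shows "A \<Otimes>\<^sub>M (B \<Otimes>\<^sub>M C) = distr (B \<Otimes>\<^sub>M (A \<Otimes>\<^sub>M C)) (A \<Otimes>\<^sub>M (B \<Otimes>\<^sub>M C)) (\<lambda>(b, a, c). (a, b, c))"
proof (rule pair_measure_eqI)
  interpret A: sigma_finite_measure A by fact
  interpret C: sigma_finite_measure C by fact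
  interpret BC: pair_sigma_finite B C
    using assms(2,3) by (rule pair_sigma_finite.intro)
  interpret AC: pair_sigma_finite A C
    using assms(1,3) by (rule pair_sigma_finite.intro)
  show "sigma_finite_measure A" "sigma_finite_measure (B \<Otimes>\<^sub>M C)"
    by unfold_locales
  show "sets (A \<Otimes>\<^sub>M (B \<Otimes>\<^sub>M C)) = sets (distr (B \<Otimes>\<^sub>M (A \<Otimes>\<^sub>M C)) (A \<Otimes>\<^sub>M (B \<Otimes>\<^sub>M C)) (\<lambda>(b, a, c). (a, b, c)))"
    by simp
  have perm: "(\<lambda>(b, a, c). (a, b, c)) \<in> measurable (B \<Otimes>\<^sub>M (A \<Otimes>\<^sub>M C)) (A \<Otimes>\<^sub>M (B \<Otimes>\<^sub>M C))"
    by measurable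
  fix X W assume X: "X \<in> sets A" and W: "W \<in> sets (B \<Otimes>\<^sub>M C)"
  let ?V = "(\<lambda>(b, a, c). (a, b, c)) -` (X \<times> W) \<inter> space (B \<Otimes>\<^sub>M (A \<Otimes>\<^sub>M C))"
  have V: "?V \<in> sets (B \<Otimes>\<^sub>M (A \<Otimes>\<^sub>M C))"
    by (rule measurable_sets[OF perm pair_measureI[OF X W]])
  have slice: "Pair b -` ?V = X \<times> (Pair b -` W)" if "b \<in> space B" for b
    using that sets.sets_into_space[OF X] sets.sets_into_space[OF W] by (auto simp: space_pair_measure)
  have "emeasure (distr (B \<Otimes>\<^sub>M (A \<Otimes>\<^sub>M C)) (A \<Otimes>\<^sub>M (B \<Otimes>\<^sub>M C)) (\<lambda>(b, a, c). (a, b, c))) (X \<times> W)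
      = (\<integral>\<^sup>+b. emeasure (A \<Otimes>\<^sub>M C) (Pair b -` ?V) \<partial>B)"
    using X W by (simp add: emeasure_distr[OF perm] AC.emeasure_pair_measure_alt[OF V])
  also have "\<dots> = (\<integral>\<^sup>+b. emeasure A X * emeasure C (Pair b -` W) \<partial>B)"
  proof (rule nn_integral_cong)
    fix b assume "b \<in> space B"
    have "Pair b -` W \<in> sets C"
      using W by (rule sets_Pair1)
    then show "emeasure (A \<Otimes>\<^sub>M C) (Pair b -` ?V) = emeasure A X * emeasure C (Pair b -` W)"
      unfolding slice[OF \<open>b \<in> space B\<close>] by (rule C.emeasure_pair_measure_Times[OF X])
  qed
  also have "\<dots> = emeasure A X * emeasure (B \<Otimes>\<^sub>M C) W"
    using W by (simp add: nn_integral_cmult C.measurable_emeasure_Pair C.emeasure_pair_measure_alt)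
  finally show "emeasure A X * emeasure (B \<Otimes>\<^sub>M C) W
      = emeasure (distr (B \<Otimes>\<^sub>M (A \<Otimes>\<^sub>M C)) (A \<Otimes>\<^sub>M (B \<Otimes>\<^sub>M C)) (\<lambda>(b, a, c). (a, b, c))) (X \<times> W)" ..
qed

lemma distr_pair_measure_distr_left_commute:
  assumes "prob_space A" "prob_space B" "prob_space C"
    and f: "f \<in> measurable A A'" and F: "F \<in> measurable (A' \<Otimes>\<^sub>M (B \<Otimes>\<^sub>M C)) K"
  shows "distr (distr A A' f \<Otimes>\<^sub>M (B \<Otimes>\<^sub>M C)) K F = distr (B \<Otimes>\<^sub>M (A \<Otimes>\<^sub>M C)) K (\<lambda>(b, a, c). F (f a, b, c))"
proof -
  interpret A: prob_space A by fact
  interpret B: prob_space B by fact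
  interpret C: prob_space C by fact
  interpret Af: prob_space "distr A A' f"
    using f by (rule A.prob_space_distr)
  interpret BC: pair_prob_space B C ..
  have "distr A A' f \<Otimes>\<^sub>M (B \<Otimes>\<^sub>M C) = distr A A' f \<Otimes>\<^sub>M distr (B \<Otimes>\<^sub>M C) (B \<Otimes>\<^sub>M C) (\<lambda>q. q)"
    by (simp add: distr_id)
  also have "\<dots> = distr (A \<Otimes>\<^sub>M (B \<Otimes>\<^sub>M C)) (A' \<Otimes>\<^sub>M (B \<Otimes>\<^sub>M C)) (\<lambda>(a, q). (f a, q))"
    using f by (intro pair_measure_distr) (simp_all add: distr_id Af.sigma_finite_measure_axioms
        BC.P.sigma_finite_measure_axioms)
  also have "A \<Otimes>\<^sub>M (B \<Otimes>\<^sub>M C) = distr (B \<Otimes>\<^sub>M (A \<Otimes>\<^sub>M C)) (A \<Otimes>\<^sub>M (B \<Otimes>\<^sub>M C)) (\<lambda>(b, a, c). (a, b, c))"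
    by (intro pair_measure_left_commute) unfold_locales
  finally show ?thesis
    using f F by (simp add: distr_distr comp_def split_beta')
qed

lemma (in sigma_finite_measure) emeasure_distr_pair_measure_distr:
  assumes V: "V \<in> measurable L N" and G: "G \<in> measurable (N \<Otimes>\<^sub>M M) K" and S: "S \<in> sets K"
  shows "emeasure (distr (distr L N V \<Otimes>\<^sub>M M) K G) S = (\<integral>\<^sup>+\<omega>. emeasure (distr M K (\<lambda>y. G (V \<omega>, y))) S \<partial>L)"
proof -
  have sets_eq: "sets (distr L N V \<Otimes>\<^sub>M M) = sets (N \<Otimes>\<^sub>M M)"
    by (rule sets_pair_measure_cong) simp_all
  have "space (distr L N V \<Otimes>\<^sub>M M) = space (N \<Otimes>\<^sub>M M)"
    using sets_eq by (rule sets_eq_imp_space_eq)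
  define A where "A = G -` S \<inter> space (N \<Otimes>\<^sub>M M)"
  have A: "A \<in> sets (N \<Otimes>\<^sub>M M)"
    unfolding A_def using G S by (rule measurable_sets)
  have "emeasure (distr (distr L N V \<Otimes>\<^sub>M M) K G) S = emeasure (distr L N V \<Otimes>\<^sub>M M) A"
    using G S \<open>space _ = _\<close> by (simp add: emeasure_distr measurable_cong_sets[OF sets_eq refl] A_def)
  also have "\<dots> = (\<integral>\<^sup>+x. emeasure M (Pair x -` A) \<partial>distr L N V)"
    using A sets_eq by (simp add: emeasure_pair_measure_alt)
  also have "\<dots> = (\<integral>\<^sup>+\<omega>. emeasure M (Pair (V \<omega>) -` A) \<partial>L)"
    using A V by (simp add: nn_integral_distr measurable_emeasure_Pair)
  also have "\<dots> = (\<integral>\<^sup>+\<omega>. emeasure (distr M K (\<lambda>y. G (V \<omega>, y))) S \<partial>L)"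
  proof (rule nn_integral_cong)
    fix \<omega> assume "\<omega> \<in> space L"
    then have "V \<omega> \<in> space N"
      by (rule measurable_space[OF V])
    then have "(\<lambda>y. G (V \<omega>, y)) \<in> measurable M K"
      using G by (intro measurable_compose[OF measurable_Pair1'])
    moreover have "Pair (V \<omega>) -` A = (\<lambda>y. G (V \<omega>, y)) -` S \<inter> space M"
      using \<open>V \<omega> \<in> space N\<close> by (auto simp: A_def space_pair_measure)
    ultimately show "emeasure M (Pair (V \<omega>) -` A) = emeasure (distr M K (\<lambda>y. G (V \<omega>, y))) S"
      using S by (simp add: emeasure_distr)
  qed
  finally show ?thesis .
qed

lemma (in prob_space) indep_var_swap:
  assumes "indep_var P U N V"
  shows "indep_var N V P U"
proof -
  have [measurable]: "U \<in> measurable M P" "V \<in> measurable M N"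
    using assms by (auto dest: indep_var_rv1 indep_var_rv2)
  interpret PV: prob_space "distr M N V"
    by (rule prob_space_distr) simp
  interpret PU: prob_space "distr M P U"
    by (rule prob_space_distr) simp
  interpret pair_sigma_finite "distr M N V" "distr M P U" ..
  have "distr M N V \<Otimes>\<^sub>M distr M P U
      = distr (distr M P U \<Otimes>\<^sub>M distr M N V) (distr M N V \<Otimes>\<^sub>M distr M P U) (\<lambda>(x, y). (y, x))"
    by (rule distr_pair_swap)
  also have "distr M P U \<Otimes>\<^sub>M distr M N V = distr M (P \<Otimes>\<^sub>M N) (\<lambda>\<omega>. (U \<omega>, V \<omega>))"
    using assms by (simp add: indep_var_distribution_eq)
  also have "distr (distr M (P \<Otimes>\<^sub>M N) (\<lambda>\<omega>. (U \<omega>, V \<omega>))) (distr M N V \<Otimes>\<^sub>M distr M P U) (\<lambda>(x, y). (y, x))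
      = distr M (N \<Otimes>\<^sub>M P) (\<lambda>\<omega>. (V \<omega>, U \<omega>))"
    by (subst distr_distr) (auto intro!: distr_cong sets_pair_measure_cong simp: comp_def)
  finally show ?thesis
    by (simp add: indep_var_distribution_eq)
qed

lemma (in prob_space) emeasure_distr_indep_var:
  assumes indep: "indep_var N V P U" and \<Psi>: "\<Psi> \<in> measurable (N \<Otimes>\<^sub>M P) K" and S: "S \<in> sets K"
  shows "emeasure (distr M K (\<lambda>\<omega>. \<Psi> (V \<omega>, U \<omega>))) S
    = (\<integral>\<^sup>+\<omega>. emeasure (distr M K (\<lambda>\<omega>'. \<Psi> (V \<omega>, U \<omega>'))) S \<partial>M)"
proof -
  have V[measurable]: "V \<in> measurable M N" and U[measurable]: "U \<in> measurable M P"
    using indep by (auto dest: indep_var_rv1 indep_var_rv2)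
  interpret PU: prob_space "distr M P U"
    by (rule prob_space_distr) simp
  have "distr M K (\<lambda>\<omega>. \<Psi> (V \<omega>, U \<omega>)) = distr (distr M (N \<Otimes>\<^sub>M P) (\<lambda>\<omega>. (V \<omega>, U \<omega>))) K \<Psi>"
    using \<Psi> by (subst distr_distr) (auto simp: comp_def)
  also have "distr M (N \<Otimes>\<^sub>M P) (\<lambda>\<omega>. (V \<omega>, U \<omega>)) = distr M N V \<Otimes>\<^sub>M distr M P U"
    using indep by (simp add: indep_var_distribution_eq)
  finally have "emeasure (distr M K (\<lambda>\<omega>. \<Psi> (V \<omega>, U \<omega>))) S
      = (\<integral>\<^sup>+\<omega>. emeasure (distr (distr M P U) K (\<lambda>y. \<Psi> (V \<omega>, y))) S \<partial>M)"
    using \<Psi> S by (simp add: PU.emeasure_distr_pair_measure_distr)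
  also have "\<dots> = (\<integral>\<^sup>+\<omega>. emeasure (distr M K (\<lambda>\<omega>'. \<Psi> (V \<omega>, U \<omega>'))) S \<partial>M)"
  proof (rule nn_integral_cong)
    fix \<omega> assume "\<omega> \<in> space M"
    then have "(\<lambda>y. \<Psi> (V \<omega>, y)) \<in> measurable P K"
      using \<Psi> by (intro measurable_compose[OF measurable_Pair1']) (auto intro: measurable_space)
    then show "emeasure (distr (distr M P U) K (\<lambda>y. \<Psi> (V \<omega>, y))) S
        = emeasure (distr M K (\<lambda>\<omega>'. \<Psi> (V \<omega>, U \<omega>'))) S"
      by (subst distr_distr) (auto simp: comp_def)
  qed
  finally show ?thesis .
qed

lemma distr_fst_eq_of_distr_pair_eq:
  assumes "distr N (A \<Otimes>\<^sub>M B) (\<lambda>\<omega>. (f \<omega>, g \<omega>)) = distr M (A \<Otimes>\<^sub>M B) (\<lambda>\<omega>. (f' \<omega>, g' \<omega>))"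
    and [measurable]: "f \<in> measurable N A" "g \<in> measurable N B" "f' \<in> measurable M A" "g' \<in> measurable M B"
  shows "distr N A f = distr M A f'"
proof -
  have "distr N A f = distr (distr N (A \<Otimes>\<^sub>M B) (\<lambda>\<omega>. (f \<omega>, g \<omega>))) A fst"
    by (subst distr_distr) (simp_all add: comp_def)
  also have "\<dots> = distr M A f'"
    unfolding assms(1) by (subst distr_distr) (simp_all add: comp_def)
  finally show ?thesis .
qed

section \<open>Evaluating cadlag paths at random times\<close>

definition dyadic_above :: "nat \<Rightarrow> real \<Rightarrow> real" where
  "dyadic_above n c = max 0 ((of_int \<lfloor>c * 2 ^ n\<rfloor> + 1) / 2 ^ n)"

text \<open>For a right-continuous path \<open>f\<close>, \<open>right_eval f c = f c\<close> (for \<open>c \<ge> 0\<close>), but \<open>right_eval\<close> only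
  looks at \<open>f\<close> at countably many times, which makes evaluation at a random time measurable.\<close>
definition right_eval :: "(real \<Rightarrow> real) \<Rightarrow> real \<Rightarrow> real" where
  "right_eval f c = lim (\<lambda>n. f (dyadic_above n c))"

lemma dyadic_above_bounds:
  assumes "c \<ge> 0"
  shows "c < dyadic_above n c" "dyadic_above n c \<le> c + 1 / 2 ^ n"
proof -
  have "c * 2 ^ n < of_int \<lfloor>c * 2 ^ n\<rfloor> + 1" "of_int \<lfloor>c * 2 ^ n\<rfloor> \<le> c * 2 ^ n"
    by linarith+
  then have "c < (of_int \<lfloor>c * 2 ^ n\<rfloor> + 1) / 2 ^ n" "(of_int \<lfloor>c * 2 ^ n\<rfloor> + 1) / 2 ^ n \<le> c + 1 / 2 ^ n"
    by (simp_all add: field_simps)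
  then show "c < dyadic_above n c" "dyadic_above n c \<le> c + 1 / 2 ^ n"
    using assms unfolding dyadic_above_def by auto
qed

lemma dyadic_above_tendsto:
  assumes "c \<ge> 0"
  shows "filterlim (\<lambda>n. dyadic_above n c) (at_right c) sequentially"
  unfolding filterlim_at
proof
  show "\<forall>\<^sub>F n in sequentially. dyadic_above n c \<in> {c<..} \<and> dyadic_above n c \<noteq> c"
    using dyadic_above_bounds(1)[OF assms] by (auto intro!: always_eventually) (metis less_irrefl)
  have "(\<lambda>n. c + (1 / 2) ^ n) \<longlonglongrightarrow> c + 0"
    by (intro tendsto_add tendsto_const LIMSEQ_realpow_zero) auto
  then have upper: "(\<lambda>n. c + 1 / 2 ^ n) \<longlonglongrightarrow> c"
    by (simp add: power_one_over)
  show "(\<lambda>n. dyadic_above n c) \<longlonglongrightarrow> c"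
    by (rule tendsto_sandwich[OF _ _ tendsto_const upper])
       (use dyadic_above_bounds[OF assms] in \<open>auto intro!: always_eventually less_imp_le\<close>)
qed

lemma right_eval_cadlag:
  assumes "cadlag_paths Z" "c \<ge> 0"
  shows "right_eval (\<lambda>r. Z r \<omega>) c = Z c \<omega>"
proof -
  have "((\<lambda>r. Z r \<omega>) \<longlongrightarrow> Z c \<omega>) (at_right c)"
    using assms unfolding cadlag_paths_def by auto
  from filterlim_compose[OF this dyadic_above_tendsto[OF assms(2)]] show ?thesis
    unfolding right_eval_def by (rule limI)
qed

lemma right_eval_path:
  assumes "cadlag_paths Z" "c \<ge> 0"
  shows "right_eval (path Z \<omega>) c = Z c \<omega>"
proof -
  have "right_eval (path Z \<omega>) c = right_eval (\<lambda>r. Z r \<omega>) c"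
    unfolding right_eval_def path_def dyadic_above_def by simp
  with right_eval_cadlag[OF assms] show ?thesis by simp
qed

lemma measurable_right_eval:
  assumes "\<And>x. x \<ge> 0 \<Longrightarrow> (\<lambda>k. F k x) \<in> borel_measurable K"
    and [measurable]: "T \<in> borel_measurable K"
  shows "(\<lambda>k. right_eval (F k) (T k)) \<in> borel_measurable K"
  unfolding right_eval_def
proof (rule borel_measurable_lim_metric)
  fix n
  have "(\<lambda>k. F k (max 0 ((of_int \<lfloor>T k * 2 ^ n\<rfloor> + 1) / 2 ^ n))) \<in> borel_measurable K"
    by (rule measurable_compose_countable[where f="\<lambda>i k. F k (max 0 ((of_int i + 1) / 2 ^ n))"])
       (use assms(1) in auto)
  then show "(\<lambda>k. F k (dyadic_above n (T k))) \<in> borel_measurable K"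
    unfolding dyadic_above_def .
qed

lemma measurable_cadlag_random_time:
  assumes "cadlag_paths Z" "\<And>t. t \<ge> 0 \<Longrightarrow> Z t \<in> borel_measurable M"
    and "T \<in> borel_measurable M" "\<And>\<omega>. T \<omega> \<ge> 0"
  shows "(\<lambda>\<omega>. Z (T \<omega>) \<omega>) \<in> borel_measurable M"
proof -
  have "(\<lambda>\<omega>. right_eval (\<lambda>r. Z r \<omega>) (T \<omega>)) \<in> borel_measurable M"
    by (rule measurable_right_eval) (use assms in auto)
  then show ?thesis
    using right_eval_cadlag[OF assms(1,4)] by simp
qed

lemma measurable_path_component:
  assumes "path P \<in> measurable M (Pi\<^sub>M {0..} (\<lambda>_. borel))" "0 \<le> t"
  shows "P t \<in> borel_measurable M"
  using measurable_comp[OF assms(1) measurable_component_singleton[of t "{0..}"]] assms(2)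
  by (simp add: comp_def path_def)

lemma measurable_time_change_functional:
  fixes \<kappa> L :: real
  assumes "0 \<le> L"
  shows "(\<lambda>(g, f). (f 1, exp (- \<kappa> * g L) * right_eval f (exp (g L))))
    \<in> measurable (Pi\<^sub>M {0..} (\<lambda>_. borel) \<Otimes>\<^sub>M Pi\<^sub>M {0..} (\<lambda>_. borel)) (borel \<Otimes>\<^sub>M borel)"
proof -
  let ?P = "Pi\<^sub>M {0..} (\<lambda>_. borel) :: (real \<Rightarrow> real) measure"
  have component: "(\<lambda>p. h p x) \<in> borel_measurable (?P \<Otimes>\<^sub>M ?P)"
    if "h \<in> measurable (?P \<Otimes>\<^sub>M ?P) ?P" "x \<ge> 0" for h and x
    using that by (auto intro!: measurable_compose[OF _ measurable_component_singleton])
  have [measurable]: "(\<lambda>p. snd p 1) \<in> borel_measurable (?P \<Otimes>\<^sub>M ?P)"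
    "(\<lambda>p. fst p L) \<in> borel_measurable (?P \<Otimes>\<^sub>M ?P)"
    using assms by (auto intro: component)
  have [measurable]: "(\<lambda>p. right_eval (snd p) (exp (fst p L))) \<in> borel_measurable (?P \<Otimes>\<^sub>M ?P)"
    by (rule measurable_right_eval) (auto intro: component)
  show ?thesis
    unfolding split_beta' by measurable
qed

section \<open>Stable martingale Levy processes and independent time changes\<close>

lemma levy_process_increment_indep:
  assumes "prob_space M" "levy_process M Z \<gamma> f" "0 < s" "s < t"
  shows "prob_space.indep_var M borel (Z s) borel (\<lambda>\<omega>. Z t \<omega> - Z s \<omega>)"
proof -
  interpret prob_space M by fact
  define ts where "ts = (\<lambda>i::nat. if i = 0 then 0 else if i = 1 then s else t)"
  have "indep_increments M Z"
    using assms(2) unfolding levy_process_def by simp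
  moreover have "0 \<le> ts 0" "\<forall>i<2. ts i < ts (Suc i)"
    using assms(3,4) by (auto simp: ts_def less_Suc_eq)
  ultimately have "indep_vars (\<lambda>_. borel) (\<lambda>i \<omega>. Z (ts (Suc i)) \<omega> - Z (ts i) \<omega>) {..<2}"
    unfolding indep_increments_def by blast
  then have "indep_var
      borel ((\<lambda>g. g 0) \<circ> (\<lambda>\<omega>. \<lambda>i\<in>{0}. Z (ts (Suc i)) \<omega> - Z (ts i) \<omega>))
      borel ((\<lambda>g. g 1) \<circ> (\<lambda>\<omega>. \<lambda>i\<in>{1}. Z (ts (Suc i)) \<omega> - Z (ts i) \<omega>))"
    by (intro indep_var_compose[OF indep_var_restrict]) auto
  moreover have "Z 0 \<omega> = 0" for \<omega>
    using assms(2) unfolding levy_process_def by simp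
  ultimately show ?thesis
    by (simp add: ts_def comp_def)
qed

locale stable_martingale_levy = prob_space M for M :: "'a measure" +
  fixes \<alpha> A B \<gamma> :: real and Z :: "real \<Rightarrow> 'a \<Rightarrow> real"
  assumes index: "1 < \<alpha>" "\<alpha> < 2"
    and weights: "A \<ge> 0" "B \<ge> 0"
    and levy: "levy_process M Z \<gamma> (stable_density \<alpha> A B)"
    and martingale: "\<gamma> + (LINT z|lborel. indicator {z. 1 \<le> \<bar>z\<bar>} z * z * stable_density \<alpha> A B z) = 0"
begin

lemma measurable_Z[measurable]: "t \<ge> 0 \<Longrightarrow> Z t \<in> borel_measurable M"
  using levy unfolding levy_process_def by simp

lemma Z_0[simp]: "Z 0 \<omega> = 0"
  using levy unfolding levy_process_def by simp

lemma cadlag: "cadlag_paths Z"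
  using levy unfolding levy_process_def by simp

lemma self_similar:
  assumes "c \<ge> 0"
  shows "distr M borel (Z c) = distr M borel (\<lambda>\<omega>. c powr (1 / \<alpha>) * Z 1 \<omega>)"
proof (cases "c = 0")
  case True
  have "Z 0 = (\<lambda>_. 0)" by auto
  with True show ?thesis by simp
next
  case False
  have char_Z: "char (distr M borel (Z t)) u = exp (complex_of_real t * levy_exponent \<gamma> (stable_density \<alpha> A B) u)"
    if "t \<ge> 0" for t u
    using levy that unfolding levy_process_def by simp
  show ?thesis
  proof (rule Levy_uniqueness)
    show "real_distribution (distr M borel (Z c))"
      "real_distribution (distr M borel (\<lambda>\<omega>. c powr (1 / \<alpha>) * Z 1 \<omega>))"
      using assms by simp_all
    show "char (distr M borel (Z c)) = char (distr M borel (\<lambda>\<omega>. c powr (1 / \<alpha>) * Z 1 \<omega>))"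
    proof
      fix u
      have "char (distr M borel (\<lambda>\<omega>. c powr (1 / \<alpha>) * Z 1 \<omega>)) u
          = (CLINT \<omega>|M. iexp ((c powr (1 / \<alpha>) * u) * Z 1 \<omega>))"
        unfolding char_def by (subst integral_distr) (auto simp: ac_simps)
      also have "\<dots> = char (distr M borel (Z 1)) (c powr (1 / \<alpha>) * u)"
        unfolding char_def by (rule integral_distr[symmetric]) auto
      also have "\<dots> = char (distr M borel (Z c)) u"
        using char_Z assms False index weights martingale
        by (simp add: levy_exponent_stable_homogeneous)
      finally show "char (distr M borel (Z c)) u = char (distr M borel (\<lambda>\<omega>. c powr (1 / \<alpha>) * Z 1 \<omega>)) u" ..
    qed
  qed
qed


lemma increment_pair_law:
  assumes "1 < c"
  shows "distr M (borel \<Otimes>\<^sub>M borel) (\<lambda>\<omega>. (Z 1 \<omega>, Z c \<omega> - Z 1 \<omega>))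
       = distr (distr M borel (Z 1) \<Otimes>\<^sub>M distr M borel (Z 1)) (borel \<Otimes>\<^sub>M borel)
           (\<lambda>(x, y). (x, (c - 1) powr (1 / \<alpha>) * y))"
proof -
  define DZ where "DZ = distr M borel (Z 1)"
  have [measurable]: "Z c \<in> borel_measurable M"
    using assms by simp
  let ?g = "\<lambda>y. (c - 1) powr (1 / \<alpha>) * y"
  have "stationary_increments M Z"
    using levy unfolding levy_process_def by simp
  have "distr M borel (\<lambda>\<omega>. Z (1 + (c - 1)) \<omega> - Z 1 \<omega>) = distr M borel (\<lambda>\<omega>. Z (c - 1) \<omega> - Z 0 \<omega>)"
    by (rule \<open>stationary_increments M Z\<close>[unfolded stationary_increments_def, rule_format])
       (use assms in auto)
  then have "distr M borel (\<lambda>\<omega>. Z c \<omega> - Z 1 \<omega>) = distr M borel (Z (c - 1))"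
    by simp
  also have "\<dots> = distr M borel (\<lambda>\<omega>. ?g (Z 1 \<omega>))"
    using self_similar[of "c - 1"] assms by simp
  also have "\<dots> = distr DZ borel ?g"
    unfolding DZ_def by (subst distr_distr) (auto simp: comp_def)
  finally have increment_law: "distr M borel (\<lambda>\<omega>. Z c \<omega> - Z 1 \<omega>) = distr DZ borel ?g" .
  have "indep_var borel (Z 1) borel (\<lambda>\<omega>. Z c \<omega> - Z 1 \<omega>)"
    using levy_process_increment_indep[OF prob_space_axioms levy] assms by simp
  then have "distr M (borel \<Otimes>\<^sub>M borel) (\<lambda>\<omega>. (Z 1 \<omega>, Z c \<omega> - Z 1 \<omega>)) = DZ \<Otimes>\<^sub>M distr DZ borel ?g"
    unfolding indep_var_distribution_eq increment_law DZ_def by simp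
  also have "\<dots> = distr (DZ \<Otimes>\<^sub>M DZ) (borel \<Otimes>\<^sub>M borel) (\<lambda>(x, y). (x, ?g y))"
    by (subst pair_measure_distr_right)
       (auto intro!: distr_cong sets_pair_measure_cong prob_space_distr simp: DZ_def)
  finally show ?thesis
    unfolding DZ_def .
qed

lemma scaled_pair_law:
  assumes "0 < r" "r \<le> 1"
  shows "distr M (borel \<Otimes>\<^sub>M borel) (\<lambda>\<omega>. (Z 1 \<omega>, r powr (1 / \<alpha>) * Z (1 / r) \<omega>))
       = distr (distr M borel (Z 1) \<Otimes>\<^sub>M distr M borel (Z 1)) (borel \<Otimes>\<^sub>M borel)
           (\<lambda>(x, y). (x, r powr (1 / \<alpha>) * x + (1 - r) powr (1 / \<alpha>) * y))"
proof -
  define DZ where "DZ = distr M borel (Z 1)"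
  interpret DZ: prob_space DZ
    unfolding DZ_def by (rule prob_space_distr) simp
  have sets_DZ2: "sets (DZ \<Otimes>\<^sub>M DZ) = sets (borel \<Otimes>\<^sub>M borel)"
    by (rule sets_pair_measure_cong) (simp_all add: DZ_def)
  show ?thesis
  proof (cases "r = 1")
    case True
    have "distr (DZ \<Otimes>\<^sub>M DZ) (borel \<Otimes>\<^sub>M borel) (\<lambda>(x, y). (x, r powr (1 / \<alpha>) * x + (1 - r) powr (1 / \<alpha>) * y))
        = distr (distr (DZ \<Otimes>\<^sub>M DZ) DZ fst) (borel \<Otimes>\<^sub>M borel) (\<lambda>x. (x, x))"
      using True by (subst distr_distr) (auto intro!: distr_cong simp: DZ_def measurable_cong_sets[OF sets_DZ2 refl])
    also have "\<dots> = distr M (borel \<Otimes>\<^sub>M borel) (\<lambda>\<omega>. (Z 1 \<omega>, Z 1 \<omega>))"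
      unfolding DZ.distr_pair_fst unfolding DZ_def by (subst distr_distr) (auto simp: comp_def)
    finally show ?thesis
      using True by (simp add: DZ_def)
  next
    case False
    define c where "c = 1 / r"
    have c: "1 < c" "r * (c - 1) = 1 - r"
      using assms False by (auto simp: c_def field_simps)
    have [measurable]: "Z c \<in> borel_measurable M"
      using c by simp
    let ?h = "\<lambda>(x, w). (x, r powr (1 / \<alpha>) * (x + w))"
    have "distr M (borel \<Otimes>\<^sub>M borel) (\<lambda>\<omega>. (Z 1 \<omega>, r powr (1 / \<alpha>) * Z (1 / r) \<omega>))
        = distr (distr M (borel \<Otimes>\<^sub>M borel) (\<lambda>\<omega>. (Z 1 \<omega>, Z c \<omega> - Z 1 \<omega>))) (borel \<Otimes>\<^sub>M borel) ?h"
      unfolding c_def[symmetric] by (subst distr_distr) (auto simp: comp_def)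
    also have "\<dots> = distr (DZ \<Otimes>\<^sub>M DZ) (borel \<Otimes>\<^sub>M borel) (?h \<circ> (\<lambda>(x, y). (x, (c - 1) powr (1 / \<alpha>) * y)))"
      unfolding increment_pair_law[OF \<open>1 < c\<close>] DZ_def[symmetric]
      by (subst distr_distr) (auto simp: measurable_cong_sets[OF sets_DZ2 refl])
    also have "?h \<circ> (\<lambda>(x, y). (x, (c - 1) powr (1 / \<alpha>) * y))
        = (\<lambda>(x, y). (x, r powr (1 / \<alpha>) * x + (1 - r) powr (1 / \<alpha>) * y))"
      using assms c by (auto simp: fun_eq_iff algebra_simps powr_mult[symmetric])
    finally show ?thesis
      unfolding DZ_def .
  qed
qed


lemma time_changed_pair_law:
  fixes \<zeta> :: "real \<Rightarrow> 'a \<Rightarrow> real"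
  assumes indep: "indep_var (Pi\<^sub>M {0..} (\<lambda>_. borel)) (path \<zeta>) (Pi\<^sub>M {0..} (\<lambda>_. borel)) (path Z)"
    and "0 \<le> L" and \<zeta>_nonneg: "\<And>\<omega>. 0 \<le> \<zeta> L \<omega>"
  shows "distr M (borel \<Otimes>\<^sub>M borel) (\<lambda>\<omega>. (Z 1 \<omega>, exp (- (1 / \<alpha>) * \<zeta> L \<omega>) * Z (exp (\<zeta> L \<omega>)) \<omega>))
    = distr (distr M borel (\<lambda>\<omega>. exp (- \<zeta> L \<omega>)) \<Otimes>\<^sub>M (distr M borel (Z 1) \<Otimes>\<^sub>M distr M borel (Z 1)))
        (borel \<Otimes>\<^sub>M borel) (\<lambda>(r, x, y). (x, r powr (1 / \<alpha>) * x + (1 - r) powr (1 / \<alpha>) * y))"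
    (is "?L = distr (?DR \<Otimes>\<^sub>M (?DZ \<Otimes>\<^sub>M ?DZ)) _ ?G")
proof (rule measure_eqI)
  have [measurable]: "\<zeta> L \<in> borel_measurable M"
    using indep_var_rv1[OF indep] \<open>0 \<le> L\<close> by (rule measurable_path_component)
  define \<Psi> where "\<Psi> = (\<lambda>(g, f). (f 1, exp (- (1 / \<alpha>) * g L) * right_eval f (exp (g L))))"
  have \<Psi>: "\<Psi> \<in> measurable (Pi\<^sub>M {0..} (\<lambda>_. borel) \<Otimes>\<^sub>M Pi\<^sub>M {0..} (\<lambda>_. borel)) (borel \<Otimes>\<^sub>M borel)"
    unfolding \<Psi>_def using \<open>0 \<le> L\<close> by (rule measurable_time_change_functional)
  have \<Psi>_path: "\<Psi> (path \<zeta> \<omega>, path Z \<omega>') = (Z 1 \<omega>', exp (- (1 / \<alpha>) * \<zeta> L \<omega>) * Z (exp (\<zeta> L \<omega>)) \<omega>')" for \<omega> \<omega>'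
    using right_eval_path[OF cadlag] \<open>0 \<le> L\<close> by (simp add: \<Psi>_def path_def)
  interpret ZZ: pair_sigma_finite ?DZ ?DZ
    by (intro pair_sigma_finite.intro prob_space_imp_sigma_finite prob_space_distr) simp_all
  have sets_ZZ: "sets (?DZ \<Otimes>\<^sub>M ?DZ) = sets (borel \<Otimes>\<^sub>M borel)"
    by (rule sets_pair_measure_cong) simp_all
  have G: "?G \<in> measurable (borel \<Otimes>\<^sub>M (?DZ \<Otimes>\<^sub>M ?DZ)) (borel \<Otimes>\<^sub>M borel)"
    unfolding measurable_cong_sets[OF sets_pair_measure_cong[OF refl sets_ZZ] refl] by measurable
  have frozen: "distr M (borel \<Otimes>\<^sub>M borel) (\<lambda>\<omega>'. \<Psi> (path \<zeta> \<omega>, path Z \<omega>'))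
      = distr (?DZ \<Otimes>\<^sub>M ?DZ) (borel \<Otimes>\<^sub>M borel) (\<lambda>q. ?G (exp (- \<zeta> L \<omega>), q))" for \<omega>
  proof -
    have "exp (- \<zeta> L \<omega>) powr (1 / \<alpha>) = exp (- (1 / \<alpha>) * \<zeta> L \<omega>)" "1 / exp (- \<zeta> L \<omega>) = exp (\<zeta> L \<omega>)"
      by (simp_all only: exp_powr_real) (simp_all add: exp_minus divide_inverse)
    then show ?thesis
      using scaled_pair_law[of "exp (- \<zeta> L \<omega>)"] \<zeta>_nonneg[of \<omega>] by (simp add: \<Psi>_path split_beta')
  qed
  fix S assume "S \<in> sets ?L"
  then have S: "S \<in> sets (borel \<Otimes>\<^sub>M borel)"
    by simp
  have "emeasure ?L S = emeasure (distr M (borel \<Otimes>\<^sub>M borel) (\<lambda>\<omega>. \<Psi> (path \<zeta> \<omega>, path Z \<omega>))) S"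
    by (simp add: \<Psi>_path)
  also have "\<dots> = (\<integral>\<^sup>+\<omega>. emeasure (distr M (borel \<Otimes>\<^sub>M borel) (\<lambda>\<omega>'. \<Psi> (path \<zeta> \<omega>, path Z \<omega>'))) S \<partial>M)"
    by (rule emeasure_distr_indep_var[OF indep \<Psi> S])
  also have "\<dots> = (\<integral>\<^sup>+\<omega>. emeasure (distr (?DZ \<Otimes>\<^sub>M ?DZ) (borel \<Otimes>\<^sub>M borel) (\<lambda>q. ?G (exp (- \<zeta> L \<omega>), q))) S \<partial>M)"
    by (simp add: frozen)
  also have "\<dots> = emeasure (distr (?DR \<Otimes>\<^sub>M (?DZ \<Otimes>\<^sub>M ?DZ)) (borel \<Otimes>\<^sub>M borel) ?G) S"
    by (rule ZZ.P.emeasure_distr_pair_measure_distr[symmetric, OF _ G S]) simp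
  finally show "emeasure ?L S = emeasure (distr (?DR \<Otimes>\<^sub>M (?DZ \<Otimes>\<^sub>M ?DZ)) (borel \<Otimes>\<^sub>M borel) ?G) S" .
qed simp

lemma time_changed_pair_law_rescaled:
  fixes \<zeta> :: "real \<Rightarrow> 'a \<Rightarrow> real"
  assumes indep: "indep_var (Pi\<^sub>M {0..} (\<lambda>_. borel)) (path \<zeta>) (Pi\<^sub>M {0..} (\<lambda>_. borel)) (path Z)"
    and "0 \<le> L" and \<zeta>_nonneg: "\<And>\<omega>. 0 \<le> \<zeta> L \<omega>"
    and "\<kappa> = 1 / \<alpha>" "0 < s" "0 \<le> t"
  shows "distr M (borel \<Otimes>\<^sub>M borel) (\<lambda>\<omega>. (s powr \<kappa> * Z 1 \<omega>, t powr \<kappa> * exp (- \<kappa> * \<zeta> L \<omega>) * Z (exp (\<zeta> L \<omega>)) \<omega>))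
    = distr (distr M borel (\<lambda>\<omega>. s powr \<kappa> * Z 1 \<omega>) \<Otimes>\<^sub>M
             (distr M borel (\<lambda>\<omega>. exp (- \<zeta> L \<omega>)) \<Otimes>\<^sub>M distr M borel (Z 1)))
        (borel \<Otimes>\<^sub>M borel) (\<lambda>(x, r, y). (x, (t / s) powr \<kappa> * (r powr \<kappa> * x + s powr \<kappa> * (1 - r) powr \<kappa> * y)))"
proof -
  let ?DZ = "distr M borel (Z 1)" and ?DR = "distr M borel (\<lambda>\<omega>. exp (- \<zeta> L \<omega>))"
  let ?G = "\<lambda>(r, x, y). (x, r powr \<kappa> * x + (1 - r) powr \<kappa> * y)"
  let ?scale = "\<lambda>(x, y). (s powr \<kappa> * x, t powr \<kappa> * y)"
  have [measurable]: "\<zeta> L \<in> borel_measurable M"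
    using indep_var_rv1[OF indep] \<open>0 \<le> L\<close> by (rule measurable_path_component)
  have [measurable]: "(\<lambda>\<omega>. Z (exp (\<zeta> L \<omega>)) \<omega>) \<in> borel_measurable M"
    using measurable_cadlag_random_time[OF cadlag measurable_Z] by simp
  have sets_RZZ: "sets (?DR \<Otimes>\<^sub>M (?DZ \<Otimes>\<^sub>M ?DZ)) = sets (borel \<Otimes>\<^sub>M (borel \<Otimes>\<^sub>M borel))"
    by (intro sets_pair_measure_cong) simp_all
  have "distr M (borel \<Otimes>\<^sub>M borel) (\<lambda>\<omega>. (s powr \<kappa> * Z 1 \<omega>, t powr \<kappa> * exp (- \<kappa> * \<zeta> L \<omega>) * Z (exp (\<zeta> L \<omega>)) \<omega>))
      = distr (distr M (borel \<Otimes>\<^sub>M borel) (\<lambda>\<omega>. (Z 1 \<omega>, exp (- \<kappa> * \<zeta> L \<omega>) * Z (exp (\<zeta> L \<omega>)) \<omega>)))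
          (borel \<Otimes>\<^sub>M borel) ?scale"
    by (subst distr_distr) (auto simp: comp_def mult.assoc)
  also have "\<dots> = distr (?DR \<Otimes>\<^sub>M (?DZ \<Otimes>\<^sub>M ?DZ)) (borel \<Otimes>\<^sub>M borel) (?scale \<circ> ?G)"
    using time_changed_pair_law[OF assms(1-3)] \<open>\<kappa> = 1 / \<alpha>\<close>
    by (simp add: distr_distr measurable_cong_sets[OF sets_RZZ refl])
  also have "?scale \<circ> ?G = (\<lambda>(r, x, y).
      (s powr \<kappa> * x, (t / s) powr \<kappa> * (r powr \<kappa> * (s powr \<kappa> * x) + s powr \<kappa> * (1 - r) powr \<kappa> * y)))"
    using \<open>0 < s\<close> \<open>0 \<le> t\<close> by (auto simp: fun_eq_iff powr_divide field_simps)
  also have "distr (?DR \<Otimes>\<^sub>M (?DZ \<Otimes>\<^sub>M ?DZ)) (borel \<Otimes>\<^sub>M borel) \<dots>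
      = distr (distr ?DZ borel (\<lambda>x. s powr \<kappa> * x) \<Otimes>\<^sub>M (?DR \<Otimes>\<^sub>M ?DZ)) (borel \<Otimes>\<^sub>M borel)
          (\<lambda>(x, r, y). (x, (t / s) powr \<kappa> * (r powr \<kappa> * x + s powr \<kappa> * (1 - r) powr \<kappa> * y)))"
    by (subst distr_pair_measure_distr_left_commute) (auto intro!: prob_space_distr)
  also have "distr ?DZ borel (\<lambda>x. s powr \<kappa> * x) = distr M borel (\<lambda>\<omega>. s powr \<kappa> * Z 1 \<omega>)"
    by (simp add: distr_distr comp_def)
  finally show ?thesis .
qed

end

section \<open>The associated process\<close>

lemma associated_process_pair_law:
  fixes Z \<zeta> :: "real \<Rightarrow> 'a \<Rightarrow> real" and X :: "real \<Rightarrow> 'b \<Rightarrow> real"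
  assumes assoc: "associated_process \<kappa> M Z \<zeta> N X"
    and Z_meas: "\<And>t. t \<ge> 0 \<Longrightarrow> Z t \<in> borel_measurable M" and cadlag: "cadlag_paths Z"
    and \<zeta>_meas: "\<And>a. a \<ge> 0 \<Longrightarrow> \<zeta> a \<in> borel_measurable M" and \<zeta>_0: "\<And>\<omega>. \<zeta> 0 \<omega> = 0"
    and "0 < s" "s \<le> t"
  shows "distr N (borel \<Otimes>\<^sub>M borel) (\<lambda>\<omega>. (X s \<omega>, X t \<omega>))
    = distr M (borel \<Otimes>\<^sub>M borel)
        (\<lambda>\<omega>. (s powr \<kappa> * Z 1 \<omega>, t powr \<kappa> * exp (- \<kappa> * \<zeta> (ln (t / s)) \<omega>) * Z (exp (\<zeta> (ln (t / s)) \<omega>)) \<omega>))"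
proof -
  let ?J = "{s, t}"
  let ?PJ = "Pi\<^sub>M ?J (\<lambda>_. borel) :: (real \<Rightarrow> real) measure"
  let ?Y = "\<lambda>\<omega>. \<lambda>u\<in>?J. u powr \<kappa> * exp (- \<kappa> * \<zeta> (- ln s + ln u) \<omega>) * Z (exp (\<zeta> (- ln s + ln u) \<omega>)) \<omega>"
  have "?J \<subseteq> {exp (- (- ln s))..}"
    using \<open>0 < s\<close> \<open>s \<le> t\<close> by auto
  with assoc have fdd: "distr N ?PJ (\<lambda>\<omega>. \<lambda>u\<in>?J. X u \<omega>) = distr M ?PJ ?Y"
    unfolding associated_process_def by (elim conjE allE[of _ "- ln s"] allE[of _ ?J]) simp
  have X_meas: "X u \<in> borel_measurable N" if "u \<in> ?J" for u
    using assoc that \<open>0 < s\<close> \<open>s \<le> t\<close> unfolding associated_process_def by auto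
  have Y_meas: "?Y \<in> measurable M ?PJ"
  proof (rule measurable_restrict)
    fix u assume "u \<in> ?J"
    then have b: "- ln s + ln u \<ge> 0"
      using \<open>0 < s\<close> \<open>s \<le> t\<close> by auto
    have [measurable]: "\<zeta> (- ln s + ln u) \<in> borel_measurable M"
      using b by (rule \<zeta>_meas)
    have "(\<lambda>\<omega>. exp (\<zeta> (- ln s + ln u) \<omega>)) \<in> borel_measurable M"
      by measurable
    then have [measurable]: "(\<lambda>\<omega>. Z (exp (\<zeta> (- ln s + ln u) \<omega>)) \<omega>) \<in> borel_measurable M"
      using measurable_cadlag_random_time[OF cadlag Z_meas] by simp
    show "(\<lambda>\<omega>. u powr \<kappa> * exp (- \<kappa> * \<zeta> (- ln s + ln u) \<omega>) * Z (exp (\<zeta> (- ln s + ln u) \<omega>)) \<omega>)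
        \<in> borel_measurable M"
      by measurable
  qed
  have pair: "(\<lambda>f. (f s, f t)) \<in> measurable ?PJ (borel \<Otimes>\<^sub>M borel)"
    by (intro measurable_Pair measurable_component_singleton) auto
  have "distr N (borel \<Otimes>\<^sub>M borel) (\<lambda>\<omega>. (X s \<omega>, X t \<omega>))
      = distr (distr N ?PJ (\<lambda>\<omega>. \<lambda>u\<in>?J. X u \<omega>)) (borel \<Otimes>\<^sub>M borel) (\<lambda>f. (f s, f t))"
    by (subst distr_distr[OF pair]) (auto intro!: measurable_restrict X_meas simp: comp_def)
  also have "\<dots> = distr M (borel \<Otimes>\<^sub>M borel) ((\<lambda>f. (f s, f t)) \<circ> ?Y)"
    unfolding fdd by (rule distr_distr[OF pair Y_meas])
  also have "\<dots> = distr M (borel \<Otimes>\<^sub>M borel)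
        (\<lambda>\<omega>. (s powr \<kappa> * Z 1 \<omega>, t powr \<kappa> * exp (- \<kappa> * \<zeta> (ln (t / s)) \<omega>) * Z (exp (\<zeta> (ln (t / s)) \<omega>)) \<omega>))"
    using \<open>0 < s\<close> \<open>s \<le> t\<close> by (intro distr_cong) (auto simp: \<zeta>_0 ln_div)
  finally show ?thesis .
qed

theorem proposition4p5:
  fixes \<alpha> \<kappa> A B \<gamma> :: real
    and M :: "'a measure" and Z \<zeta> :: "real \<Rightarrow> 'a \<Rightarrow> real" and \<psi> :: "real \<Rightarrow> real"
    and N :: "'b measure" and X :: "real \<Rightarrow> 'b \<Rightarrow> real"
    and s t :: real
  assumes "1 < \<alpha>" "\<alpha> < 2" and "A > 0" "B > 0"
    and "prob_space M" "prob_space N"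
    and "levy_process M Z \<gamma> (stable_density \<alpha> A B)"
    and "\<gamma> + (LINT z|lborel. indicator {z. 1 \<le> \<bar>z\<bar>} z * z * stable_density \<alpha> A B z) = 0"
    and "\<kappa> = 1 / \<alpha>"
    and "subordinator M \<zeta> \<psi>" and "\<psi> \<kappa> = \<kappa>"
    and "prob_space.indep_var M (Pi\<^sub>M {0..} (\<lambda>_. borel)) (path Z) (Pi\<^sub>M {0..} (\<lambda>_. borel)) (path \<zeta>)"
    and "associated_process \<kappa> M Z \<zeta> N X"
    and "0 < s" "s \<le> t"
  shows "distr N (borel \<Otimes>\<^sub>M borel) (\<lambda>\<omega>. (X s \<omega>, X t \<omega>)) =
         distr (distr N borel (X s) \<Otimes>\<^sub>M
                (distr M borel (\<lambda>\<omega>. exp (- \<zeta> (ln (t / s)) \<omega>)) \<Otimes>\<^sub>M distr M borel (Z 1)))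
               (borel \<Otimes>\<^sub>M borel)
               (\<lambda>(x, r, y). (x, (t / s) powr \<kappa> * (r powr \<kappa> * x + s powr \<kappa> * (1 - r) powr \<kappa> * y)))"
proof -
  interpret stable_martingale_levy M \<alpha> A B \<gamma> Z
    using assms(1-8) by (simp add: stable_martingale_levy_def stable_martingale_levy_axioms_def)
  have \<zeta>_meas: "\<And>a. a \<ge> 0 \<Longrightarrow> \<zeta> a \<in> borel_measurable M" and \<zeta>_0: "\<And>\<omega>. \<zeta> 0 \<omega> = 0"
    and \<zeta>_nonneg: "\<And>a \<omega>. a \<ge> 0 \<Longrightarrow> 0 \<le> \<zeta> a \<omega>"
    using \<open>subordinator M \<zeta> \<psi>\<close> unfolding subordinator_def by auto
  define L where "L = ln (t / s)"
  have "0 \<le> L"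
    using \<open>0 < s\<close> \<open>s \<le> t\<close> by (simp add: L_def)
  have [measurable]: "\<zeta> L \<in> borel_measurable M" "X s \<in> borel_measurable N" "X t \<in> borel_measurable N"
    using \<open>0 \<le> L\<close> \<zeta>_meas \<open>associated_process \<kappa> M Z \<zeta> N X\<close> \<open>0 < s\<close> \<open>s \<le> t\<close>
    by (auto simp: associated_process_def)
  have [measurable]: "(\<lambda>\<omega>. Z (exp (\<zeta> L \<omega>)) \<omega>) \<in> borel_measurable M"
    using measurable_cadlag_random_time[OF cadlag measurable_Z] by simp
  have XY: "distr N (borel \<Otimes>\<^sub>M borel) (\<lambda>\<omega>. (X s \<omega>, X t \<omega>))
      = distr M (borel \<Otimes>\<^sub>M borel) (\<lambda>\<omega>. (s powr \<kappa> * Z 1 \<omega>, t powr \<kappa> * exp (- \<kappa> * \<zeta> L \<omega>) * Z (exp (\<zeta> L \<omega>)) \<omega>))"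
    unfolding L_def using assms(13-15) \<zeta>_meas \<zeta>_0 by (intro associated_process_pair_law measurable_Z cadlag) auto
  then have Xs: "distr N borel (X s) = distr M borel (\<lambda>\<omega>. s powr \<kappa> * Z 1 \<omega>)"
    by (rule distr_fst_eq_of_distr_pair_eq) simp_all
  have "0 \<le> t"
    using \<open>0 < s\<close> \<open>s \<le> t\<close> by simp
  show ?thesis
    unfolding L_def[symmetric] XY Xs
    by (rule time_changed_pair_law_rescaled[OF indep_var_swap[OF assms(12)] \<open>0 \<le> L\<close> \<zeta>_nonneg[OF \<open>0 \<le> L\<close>]
          \<open>\<kappa> = 1 / \<alpha>\<close> \<open>0 < s\<close> \<open>0 \<le> t\<close>])
qed

end
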